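(* Let $(A,\cdot,[-,-,-],\varepsilon)$ be a ternary Leibniz-Poisson color algebra. Then $A\otimes A$, graded by $(A\otimes A)_c=\bigoplus_{a+b=c}A_a\otimes A_b$, is a Leibniz-Poisson color algebra with the operations defined on homogeneous tensors by $$(x\otimes y)\cdot(x'\otimes y'):=\varepsilon(y,x')\,(x\cdot x')\otimes(y\cdot y'),\qquad [x\otimes y,x'\otimes y']:=x\otimes[y,x',y']+\varepsilon(y,x'+y')\,[x,x',y']\otimes y,$$ extended bilinearly.
   Context: $G$ is an abelian group, $\mathbb{K}$ a field of characteristic $\neq 2$, $\mathcal{H}(V)$ the homogeneous elements of a $G$-graded space $V$; even maps preserve degree. A skew-symmetric bicharacter $\varepsilon:G\times G\to\mathbb{K}^*$ satisfies $\varepsilon(a,b)\varepsilon(b,a)=1$, $\varepsilon(a,b+c)=\varepsilon(a,b)\varepsilon(a,c)$, $\varepsilon(a+b,c)=\varepsilon(a,c)\varepsilon(b,c)$; $\varepsilon(x,y)$ means $\varepsilon$ of the degrees. A Leibniz-Poisson color algebra $(P,\cdot,[-,-],\varepsilon)$ is a $G$-graded space with even bilinear maps $\cdot$ and $[-,-]$ such that $(P,\cdot)$ is associative, $[[x,y],z]=[x,[y,z]]+\varepsilon(y,z)[[x,z],y]$, and $[x\cdot y,z]=x\cdot[y,z]+\varepsilon(y,z)[x,z]\cdot y$ for all homogeneous $x,y,z$. A ternary Leibniz-Poisson color algebra $(A,\cdot,[-,-,-],\varepsilon)$ is a $G$-graded space with an even associative product $\cdot$ and an even trilinear $[-,-,-]$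 such that $[[x,y,z],t,u]=[x,y,[z,t,u]]+\varepsilon(z,t+u)[x,[y,t,u],z]+\varepsilon(y+z,t+u)[[x,t,u],y,z]$ and $[x\cdot y,z,t]=x\cdot[y,z,t]+\varepsilon(y,z+t)[x,z,t]\cdot y$ for all homogeneous $x,y,z,t,u$. *)

theory Defs
  imports Complex_Main
begin

definition bilinear_map ::
  "('k::field \<Rightarrow> 'a::ab_group_add \<Rightarrow> 'a) \<Rightarrow> ('k \<Rightarrow> 'b::ab_group_add \<Rightarrow> 'b) \<Rightarrow> ('a \<Rightarrow> 'a \<Rightarrow> 'b) \<Rightarrow> bool" where
  "bilinear_map s t f \<longleftrightarrow>
     (\<forall>y. Vector_Spaces.linear s t (\<lambda>x. f x y)) \<and> (\<forall>x. Vector_Spaces.linear s t (\<lambda>y. f x y))"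

definition trilinear_map ::
  "('k::field \<Rightarrow> 'a::ab_group_add \<Rightarrow> 'a) \<Rightarrow> ('k \<Rightarrow> 'b::ab_group_add \<Rightarrow> 'b) \<Rightarrow> ('a \<Rightarrow> 'a \<Rightarrow> 'a \<Rightarrow> 'b) \<Rightarrow> bool" where
  "trilinear_map s t f \<longleftrightarrow>
     (\<forall>y z. Vector_Spaces.linear s t (\<lambda>x. f x y z)) \<and>
     (\<forall>x z. Vector_Spaces.linear s t (\<lambda>y. f x y z)) \<and>
     (\<forall>x y. Vector_Spaces.linear s t (\<lambda>z. f x y z))"

definition graded_space :: "('k::field \<Rightarrow> 'v::ab_group_add \<Rightarrow> 'v) \<Rightarrow> ('g \<Rightarrow> 'v set) \<Rightarrow> bool" where
  "graded_space s V \<longleftrightarrow>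
     vector_space s \<and>
     (\<forall>g. module.subspace s (V g)) \<and>
     (\<forall>v. \<exists>f. finite {g. f g \<noteq> 0} \<and> (\<forall>g. f g \<in> V g) \<and> v = (\<Sum>g\<in>{g. f g \<noteq> 0}. f g)) \<and>
     (\<forall>f. finite {g. f g \<noteq> 0} \<and> (\<forall>g. f g \<in> V g) \<and> (\<Sum>g\<in>{g. f g \<noteq> 0}. f g) = 0 \<longrightarrow> (\<forall>g. f g = 0))"

definition even2 :: "('g::ab_group_add \<Rightarrow> 'v set) \<Rightarrow> ('v \<Rightarrow> 'v \<Rightarrow> 'v) \<Rightarrow> bool" where
  "even2 V m \<longleftrightarrow> (\<forall>a b x y. x \<in> V a \<longrightarrow> y \<in> V b \<longrightarrow> m x y \<in> V (a + b))"

definition even3 :: "('g::ab_group_add \<Rightarrow> 'v set) \<Rightarrow> ('v \<Rightarrow> 'v \<Rightarrow> 'v \<Rightarrow> 'v) \<Rightarrow> bool" where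
  "even3 V m \<longleftrightarrow> (\<forall>a b c x y z. x \<in> V a \<longrightarrow> y \<in> V b \<longrightarrow> z \<in> V c \<longrightarrow> m x y z \<in> V (a + b + c))"

definition skew_bicharacter :: "('g::ab_group_add \<Rightarrow> 'g \<Rightarrow> 'k::field) \<Rightarrow> bool" where
  "skew_bicharacter \<epsilon> \<longleftrightarrow>
     (\<forall>a b. \<epsilon> a b * \<epsilon> b a = 1) \<and>
     (\<forall>a b c. \<epsilon> a (b + c) = \<epsilon> a b * \<epsilon> a c) \<and>
     (\<forall>a b c. \<epsilon> (a + b) c = \<epsilon> a c * \<epsilon> b c)"

definition LP_color_algebra ::
  "('k::field \<Rightarrow> 'v::ab_group_add \<Rightarrow> 'v) \<Rightarrow> ('g::ab_group_add \<Rightarrow> 'v set) \<Rightarrow>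
   ('v \<Rightarrow> 'v \<Rightarrow> 'v) \<Rightarrow> ('v \<Rightarrow> 'v \<Rightarrow> 'v) \<Rightarrow> ('g \<Rightarrow> 'g \<Rightarrow> 'k) \<Rightarrow> bool" where
  "LP_color_algebra s V mul br \<epsilon> \<longleftrightarrow>
     graded_space s V \<and>
     bilinear_map s s mul \<and> even2 V mul \<and>
     bilinear_map s s br \<and> even2 V br \<and>
     (\<forall>x y z. mul (mul x y) z = mul x (mul y z)) \<and>
     (\<forall>a b c x y z. x \<in> V a \<longrightarrow> y \<in> V b \<longrightarrow> z \<in> V c \<longrightarrow>
        br (br x y) z = br x (br y z) + s (\<epsilon> b c) (br (br x z) y)) \<and>
     (\<forall>a b c x y z. x \<in> V a \<longrightarrow> y \<in> V b \<longrightarrow> z \<in> V c \<longrightarrow>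
        br (mul x y) z = mul x (br y z) + s (\<epsilon> b c) (mul (br x z) y))"

definition ternary_LP_color_algebra ::
  "('k::field \<Rightarrow> 'v::ab_group_add \<Rightarrow> 'v) \<Rightarrow> ('g::ab_group_add \<Rightarrow> 'v set) \<Rightarrow>
   ('v \<Rightarrow> 'v \<Rightarrow> 'v) \<Rightarrow> ('v \<Rightarrow> 'v \<Rightarrow> 'v \<Rightarrow> 'v) \<Rightarrow> ('g \<Rightarrow> 'g \<Rightarrow> 'k) \<Rightarrow> bool" where
  "ternary_LP_color_algebra s V mul br \<epsilon> \<longleftrightarrow>
     graded_space s V \<and>
     bilinear_map s s mul \<and> even2 V mul \<and>
     trilinear_map s s br \<and> even3 V br \<and>
     (\<forall>x y z. mul (mul x y) z = mul x (mul y z)) \<and>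
     (\<forall>a b c d e x y z t u. x \<in> V a \<longrightarrow> y \<in> V b \<longrightarrow> z \<in> V c \<longrightarrow> t \<in> V d \<longrightarrow> u \<in> V e \<longrightarrow>
        br (br x y z) t u = br x y (br z t u) + s (\<epsilon> c (d + e)) (br x (br y t u) z)
                            + s (\<epsilon> (b + c) (d + e)) (br (br x t u) y z)) \<and>
     (\<forall>a b c d x y z t. x \<in> V a \<longrightarrow> y \<in> V b \<longrightarrow> z \<in> V c \<longrightarrow> t \<in> V d \<longrightarrow>
        br (mul x y) z t = mul x (br y z t) + s (\<epsilon> b (c + d)) (mul (br x z t) y))"

(* Together
   with uniqueness this forces range tp to span T and T to be isomorphic
   to the usual tensor product. *)
definition tensor_product ::
  "('k::field \<Rightarrow> 'a::ab_group_add \<Rightarrow> 'a) \<Rightarrow> ('k \<Rightarrow> 't::ab_group_add \<Rightarrow> 't) \<Rightarrow> ('a \<Rightarrow> 'a \<Rightarrow> 't) \<Rightarrow> bool" where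
  "tensor_product s t tp \<longleftrightarrow>
     vector_space s \<and> vector_space t \<and> bilinear_map s t tp \<and>
     (\<forall>f :: 'a \<Rightarrow> 'a \<Rightarrow> 'k. bilinear_map s (*) f \<longrightarrow>
        (\<exists>!g. Vector_Spaces.linear t (*) g \<and> (\<forall>x y. g (tp x y) = f x y)))"

definition tensor_grading ::
  "('k::field \<Rightarrow> 't::ab_group_add \<Rightarrow> 't) \<Rightarrow> ('g::ab_group_add \<Rightarrow> 'a set) \<Rightarrow> ('a \<Rightarrow> 'a \<Rightarrow> 't) \<Rightarrow> 'g \<Rightarrow> 't set" where
  "tensor_grading t V tp c = module.span t {tp x y | x y a b. x \<in> V a \<and> y \<in> V b \<and> a + b = c}"

end

theory Submission
  imports Defs
begin

text \<open>A homogeneous basis of A gives a basis of A \<otimes> A consisting of tensors b \<otimes> c of homogeneous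
  basis vectors. Defining both operations on it by the displayed formulas and extending
  bilinearly gives bilinear maps satisfying the formulas on all homogeneous tensors, and the same
  basis, graded by deg b + deg c, shows that the stated grading of A \<otimes> A is a direct sum
  decomposition. The axioms of a Leibniz-Poisson color algebra are trilinear identities, so it
  suffices to check them on homogeneous pure tensors, where they follow by expanding with the
  ternary identities of A and the bicharacter laws.\<close>

section \<open>Multilinear maps\<close>

lemma bilinear_mapD:
  assumes "bilinear_map s t f"
  shows "f (x + y) z = f x z + f y z" "f (s c x) z = t c (f x z)"
    and "f z (x + y) = f z x + f z y" "f z (s c x) = t c (f z x)"
  using assms unfolding bilinear_map_def Vector_Spaces.linear_iff by auto

lemma trilinear_mapD:
  assumes "trilinear_map s t f"
  shows "f (x + y) z w = f x z w + f y z w" "f (s c x) z w = t c (f x z w)"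
    and "f z (x + y) w = f z x w + f z y w" "f z (s c x) w = t c (f z x w)"
    and "f z w (x + y) = f z w x + f z w y" "f z w (s c x) = t c (f z w x)"
  using assms unfolding trilinear_map_def Vector_Spaces.linear_iff by auto

context vector_space_pair
begin

lemma bilinear_mapI:
  assumes "\<And>x y z. f (x + y) z = f x z + f y z" "\<And>c x z. f (s1 c x) z = s2 c (f x z)"
    and "\<And>x y z. f z (x + y) = f z x + f z y" "\<And>c x z. f z (s1 c x) = s2 c (f z x)"
  shows "bilinear_map s1 s2 f"
  using assms vs1.vector_space_axioms vs2.vector_space_axioms
  unfolding bilinear_map_def Vector_Spaces.linear_iff by blast

lemma trilinear_mapI:
  assumes "\<And>x y z w. f (x + y) z w = f x z w + f y z w" "\<And>c x z w. f (s1 c x) z w = s2 c (f x z w)"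
    and "\<And>x y z w. f z (x + y) w = f z x w + f z y w" "\<And>c x z w. f z (s1 c x) w = s2 c (f z x w)"
    and "\<And>x y z w. f z w (x + y) = f z w x + f z w y" "\<And>c x z w. f z w (s1 c x) = s2 c (f z w x)"
  shows "trilinear_map s1 s2 f"
  using assms vs1.vector_space_axioms vs2.vector_space_axioms
  unfolding trilinear_map_def Vector_Spaces.linear_iff by auto

lemma bilinear_eq_on_span:
  assumes f: "bilinear_map s1 s2 f" and g: "bilinear_map s1 s2 g"
    and eq: "\<And>x y. x \<in> X \<Longrightarrow> y \<in> Y \<Longrightarrow> f x y = g x y"
    and x: "x \<in> vs1.span X" and y: "y \<in> vs1.span Y"
  shows "f x y = g x y"
proof -
  have "f x' y = g x' y" if "x' \<in> X" for x'
    using f g eq that unfolding bilinear_map_def by (blast intro: linear_eq_on[OF _ _ y])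
  then show ?thesis
    using f g unfolding bilinear_map_def
    by (blast intro: linear_eq_on[where f="\<lambda>x. f x y" and g="\<lambda>x. g x y", OF _ _ x])
qed

lemma trilinear_eq_on_span:
  assumes f: "trilinear_map s1 s2 f" and g: "trilinear_map s1 s2 g"
    and eq: "\<And>x y z. x \<in> X \<Longrightarrow> y \<in> Y \<Longrightarrow> z \<in> Z \<Longrightarrow> f x y z = g x y z"
    and x: "x \<in> vs1.span X" and y: "y \<in> vs1.span Y" and z: "z \<in> vs1.span Z"
  shows "f x y z = g x y z"
proof -
  have "f x' y' z = g x' y' z" if "x' \<in> X" "y' \<in> Y" for x' y'
    using f g eq that unfolding trilinear_map_def by (blast intro: linear_eq_on[OF _ _ z])
  then have "f x' y z = g x' y z" if "x' \<in> X" for x'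
    using f g that unfolding trilinear_map_def
    by (blast intro: linear_eq_on[where f="\<lambda>y. f x' y z" and g="\<lambda>y. g x' y z", OF _ _ y])
  then show ?thesis
    using f g unfolding trilinear_map_def
    by (blast intro: linear_eq_on[where f="\<lambda>x. f x y z" and g="\<lambda>x. g x y z", OF _ _ x])
qed

lemma bilinear_map_span_mem:
  assumes f: "bilinear_map s1 s2 f" and W: "vs2.subspace W"
    and gen: "\<And>x y. x \<in> X \<Longrightarrow> y \<in> Y \<Longrightarrow> f x y \<in> W"
    and x: "x \<in> vs1.span X" and y: "y \<in> vs1.span Y"
  shows "f x y \<in> W"
proof -
  have preimage: "vs1.subspace {x. h x \<in> W}" if "Vector_Spaces.linear s1 s2 h" for h
    using linear_subspace_vimage[OF that W] by (simp add: vimage_def)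
  have "f x' y \<in> W" if "x' \<in> X" for x'
    using vs1.span_induct[OF y preimage] f gen that unfolding bilinear_map_def by blast
  then show ?thesis
    using vs1.span_induct[OF x preimage, of "\<lambda>x. f x y"] f unfolding bilinear_map_def by blast
qed

lemma bilinear_map_construct2:
  assumes "vs1.independent B"
  shows "bilinear_map s1 s2 (\<lambda>u w. construct B (\<lambda>e. construct B (h e) w) u)"
proof (rule bilinear_mapI)
  have inner: "Vector_Spaces.linear s1 s2 (construct B (h e))" for e
    by (rule linear_construct[OF assms])
  show "construct B (\<lambda>e. construct B (h e) w) (x + y) =
      construct B (\<lambda>e. construct B (h e) w) x + construct B (\<lambda>e. construct B (h e) w) y"
    "construct B (\<lambda>e. construct B (h e) w) (s1 c x) = s2 c (construct B (\<lambda>e. construct B (h e) w) x)"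
    for w x y c using linear_construct[OF assms] unfolding Vector_Spaces.linear_iff by blast+
  show "construct B (\<lambda>e. construct B (h e) (x + y)) u =
      construct B (\<lambda>e. construct B (h e) x) u + construct B (\<lambda>e. construct B (h e) y) u" for x y u
    by (simp add: linear_add[OF inner] construct_add[OF assms])
  show "construct B (\<lambda>e. construct B (h e) (s1 c x)) u = s2 c (construct B (\<lambda>e. construct B (h e) x) u)"
    for c x u by (simp add: linear_scale[OF inner] construct_scale[OF assms])
qed

lemma construct2_basis:
  "vs1.independent B \<Longrightarrow> e \<in> B \<Longrightarrow> e' \<in> B \<Longrightarrow> construct B (\<lambda>b. construct B (h b) e') e = h e e'"
  by (simp add: construct_basis)

end

section \<open>Graded vector spaces\<close>

lemma sum_nonzero_fibres:
  fixes w :: "'a \<Rightarrow> 'v::comm_monoid_add" and d :: "'a \<Rightarrow> 'g"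
  assumes E: "finite E"
  defines "F \<equiv> \<lambda>g. \<Sum>e\<in>{e\<in>E. d e = g}. w e"
  shows "finite {g. F g \<noteq> 0}" and "(\<Sum>g | F g \<noteq> 0. F g) = (\<Sum>e\<in>E. w e)"
proof -
  have supp: "{g. F g \<noteq> 0} \<subseteq> d ` E"
    unfolding F_def by (force intro: sum.neutral)
  then show "finite {g. F g \<noteq> 0}"
    using E finite_subset by blast
  have "(\<Sum>g | F g \<noteq> 0. F g) = (\<Sum>g\<in>d ` E. F g)"
    by (rule sum.mono_neutral_left) (use supp E in auto)
  also have "\<dots> = (\<Sum>e\<in>E. w e)"
    unfolding F_def by (rule sum.image_gen[symmetric]) (rule E)
  finally show "(\<Sum>g | F g \<noteq> 0. F g) = (\<Sum>e\<in>E. w e)" .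
qed

lemma (in vector_space) graded_space_basis_fibres:
  assumes indep: "independent B" and spanning: "span B = UNIV"
  shows "graded_space scale (\<lambda>g. span {b \<in> B. d b = g})"
  unfolding graded_space_def
proof (intro conjI allI impI)
  show "vector_space scale" by (rule vector_space_axioms)
  show "subspace (span {b \<in> B. d b = g})" for g by simp
next
  fix v
  let ?R = "representation B v"
  define E where "E = {e. ?R e \<noteq> 0}"
  define F where "F g = (\<Sum>e\<in>{e\<in>E. d e = g}. scale (?R e) e)" for g
  have E: "finite E" "E \<subseteq> B"
    unfolding E_def using finite_representation representation_ne_zero by auto
  have "F g \<in> span {b \<in> B. d b = g}" for g
    unfolding F_def using E(2) by (intro span_sum span_scale span_base) auto
  moreover have "finite {g. F g \<noteq> 0}"
    unfolding F_def by (rule sum_nonzero_fibres(1)[OF E(1)])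
  moreover have "v = (\<Sum>g | F g \<noteq> 0. F g)"
    using sum_nonzero_fibres(2)[OF E(1), of "\<lambda>e. scale (?R e) e" d]
      sum_nonzero_representation_eq[OF indep, of v]
    by (simp add: F_def E_def spanning)
  ultimately show "\<exists>F. finite {g. F g \<noteq> 0} \<and> (\<forall>g. F g \<in> span {b \<in> B. d b = g}) \<and> v = (\<Sum>g | F g \<noteq> 0. F g)"
    by blast
next
  fix F g0
  assume F: "finite {g. F g \<noteq> 0} \<and> (\<forall>g. F g \<in> span {b \<in> B. d b = g}) \<and> (\<Sum>g | F g \<noteq> 0. F g) = 0"
  interpret P: vector_space_pair scale scale ..
  \<comment> \<open>projection onto the fibre over g0 along the other fibres; it kills every other component\<close>
  define p where "p = P.construct B (\<lambda>b. if d b = g0 then b else 0)"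
  have lin_p: "Vector_Spaces.linear scale scale p"
    unfolding p_def by (rule P.linear_construct[OF indep])
  have "p (F g) = (if g = g0 then F g else 0)" for g
  proof (rule P.linear_eq_on[where f=p, OF lin_p _ spec[OF conjunct1[OF conjunct2[OF F]], of g]])
    show "Vector_Spaces.linear scale scale (\<lambda>x. if g = g0 then x else 0)"
      by (cases "g = g0") (simp_all add: linear_ident P.linear_zero)
    show "p b = (if g = g0 then b else 0)" if "b \<in> {b \<in> B. d b = g}" for b
      using that P.construct_basis[OF indep] unfolding p_def by auto
  qed
  then have "p (\<Sum>g | F g \<noteq> 0. F g) = (\<Sum>g | F g \<noteq> 0. if g = g0 then F g else 0)"
    by (simp add: P.linear_sum[OF lin_p])
  also have "\<dots> = F g0"
    using F by (simp add: sum.delta)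
  finally show "F g0 = 0"
    using F P.linear_0[OF lin_p] by simp
qed

locale graded_vector_space =
  fixes scale :: "'k::field \<Rightarrow> 'a::ab_group_add \<Rightarrow> 'a" and V :: "'g \<Rightarrow> 'a set"
  assumes graded: "graded_space scale V"
begin

sublocale vector_space scale
  using graded unfolding graded_space_def by blast

lemma subspace_component: "subspace (V g)"
  using graded unfolding graded_space_def by blast

lemma homogeneous_decomposition:
  "\<exists>f. finite {g. f g \<noteq> 0} \<and> (\<forall>g. f g \<in> V g) \<and> v = (\<Sum>g | f g \<noteq> 0. f g)"
  using graded unfolding graded_space_def by (elim conjE) (rule spec)

lemma homogeneous_sum_eq_0:
  assumes "finite {g. f g \<noteq> 0}" and "\<forall>g. f g \<in> V g" and "(\<Sum>g | f g \<noteq> 0. f g) = 0"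
  shows "f g = 0"
proof -
  have "\<forall>f. finite {g. f g \<noteq> 0} \<and> (\<forall>g. f g \<in> V g) \<and> (\<Sum>g | f g \<noteq> 0. f g) = 0 \<longrightarrow> (\<forall>g. f g = 0)"
    using graded unfolding graded_space_def by (elim conjE) assumption
  then show ?thesis
    using assms by blast
qed

lemma degree_unique:
  assumes xa: "x \<in> V a" and xb: "x \<in> V b" and x0: "x \<noteq> 0"
  shows "a = b"
proof (rule ccontr)
  assume ab: "a \<noteq> b"
  define f where "f g = (if g = a then x else if g = b then - x else 0)" for g
  have supp: "{g. f g \<noteq> 0} = {a, b}"
    using ab x0 by (auto simp: f_def)
  have "f g \<in> V g" for g
    using xa subspace_neg[OF subspace_component xb] subspace_0[OF subspace_component, of g]
    by (simp add: f_def)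
  moreover have "(\<Sum>g | f g \<noteq> 0. f g) = 0"
    unfolding supp using ab by (simp add: f_def)
  moreover have "finite {g. f g \<noteq> 0}"
    unfolding supp by simp
  ultimately have "f a = 0"
    using homogeneous_sum_eq_0 by blast
  then show False
    using x0 by (simp add: f_def)
qed

definition component_basis :: "'g \<Rightarrow> 'a set" where
  "component_basis g = (SOME B. B \<subseteq> V g \<and> independent B \<and> V g \<subseteq> span B)"

lemma component_basis:
  "component_basis g \<subseteq> V g" "independent (component_basis g)" "span (component_basis g) = V g"
proof -
  let ?P = "\<lambda>B. B \<subseteq> V g \<and> independent B \<and> V g \<subseteq> span B"
  obtain B where "B \<subseteq> V g" "independent B" "V g \<subseteq> span B"
    by (rule maximal_independent_subset[of "V g"])
  then have "?P (component_basis g)"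
    unfolding component_basis_def by (intro someI[of ?P B]) simp
  then show "component_basis g \<subseteq> V g" "independent (component_basis g)" "span (component_basis g) = V g"
    using span_minimal[OF _ subspace_component, of "component_basis g" g] by auto
qed

definition homogeneous_basis :: "'a set" where
  "homogeneous_basis = (\<Union>g. component_basis g)"

definition deg :: "'a \<Rightarrow> 'g" where
  "deg b = (SOME g. b \<in> component_basis g)"

lemma component_basis_deg: "b \<in> homogeneous_basis \<Longrightarrow> b \<in> component_basis (deg b)"
  unfolding homogeneous_basis_def deg_def by (auto intro: someI)

lemma deg_component_basis:
  assumes "b \<in> component_basis g"
  shows "deg b = g"
proof -
  have "b \<in> component_basis (deg b)"
    using assms by (intro component_basis_deg) (auto simp: homogeneous_basis_def)
  moreover have "b \<noteq> 0"
    using assms component_basis(2)[of g] dependent_zero[of "component_basis g"] by blast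
  ultimately show ?thesis
    using assms component_basis(1) degree_unique[of b "deg b" g] by blast
qed

lemma component_basis_subset: "component_basis g \<subseteq> homogeneous_basis"
  unfolding homogeneous_basis_def by blast

lemma homogeneous_basis_homogeneous: "b \<in> homogeneous_basis \<Longrightarrow> b \<in> V (deg b)"
  using component_basis_deg component_basis(1) by blast

lemma component_span_homogeneous_basis: "V g = span {b \<in> homogeneous_basis. deg b = g}"
proof -
  have "{b \<in> homogeneous_basis. deg b = g} = component_basis g"
    using component_basis_deg deg_component_basis unfolding homogeneous_basis_def by blast
  then show ?thesis
    using component_basis(3) by simp
qed

lemma independent_homogeneous_basis: "independent homogeneous_basis"
  unfolding independent_explicit_finite_subsets
proof (intro allI impI ballI)
  fix X u v0
  assume X: "X \<subseteq> homogeneous_basis" and fin: "finite X"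
    and sum0: "(\<Sum>v\<in>X. scale (u v) v) = 0" and v0: "v0 \<in> X"
  define F where "F g = (\<Sum>v\<in>{v\<in>X. deg v = g}. scale (u v) v)" for g
  have "F g \<in> V g" for g
    unfolding F_def using X homogeneous_basis_homogeneous
    by (intro subspace_sum[OF subspace_component] subspace_scale[OF subspace_component]) auto
  moreover have "finite {g. F g \<noteq> 0}"
    unfolding F_def by (rule sum_nonzero_fibres(1)[OF fin])
  moreover have "(\<Sum>g | F g \<noteq> 0. F g) = 0"
    using sum_nonzero_fibres(2)[OF fin, of "\<lambda>v. scale (u v) v" deg] sum0 unfolding F_def by simp
  ultimately have "F (deg v0) = 0"
    using homogeneous_sum_eq_0 by blast
  moreover have "{v\<in>X. deg v = deg v0} \<subseteq> component_basis (deg v0)"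
    using X component_basis_deg by fastforce
  ultimately show "u v0 = 0"
    using independentD[OF component_basis(2), where t="{v\<in>X. deg v = deg v0}" and u=u and v=v0] fin v0
    unfolding F_def by simp
qed

lemma span_homogeneous_basis: "span homogeneous_basis = UNIV"
proof -
  have "v \<in> span homogeneous_basis" for v
  proof -
    obtain f where "\<forall>g. f g \<in> V g" and v: "v = (\<Sum>g | f g \<noteq> 0. f g)"
      using homogeneous_decomposition by blast
    then have "f g \<in> span homogeneous_basis" for g
      using component_basis(3) span_mono[of "component_basis g" homogeneous_basis]
      unfolding homogeneous_basis_def by auto
    then show ?thesis
      unfolding v by (intro span_sum)
  qed
  then show ?thesis by auto
qed

end

section \<open>Tensor products\<close>

locale tensor_product_space =
  fixes s :: "'k::field \<Rightarrow> 'a::ab_group_add \<Rightarrow> 'a"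
    and t :: "'k \<Rightarrow> 't::ab_group_add \<Rightarrow> 't"
    and tp :: "'a \<Rightarrow> 'a \<Rightarrow> 't"
  assumes tensor_product: "tensor_product s t tp"
begin

sublocale S: vector_space s
  using tensor_product unfolding tensor_product_def by blast
sublocale T: vector_space t
  using tensor_product unfolding tensor_product_def by blast
sublocale ST: vector_space_pair s t ..
sublocale TT: vector_space_pair t t ..
sublocale SK: vector_space_pair s "(*) :: 'k \<Rightarrow> 'k \<Rightarrow> 'k"
  by unfold_locales (auto simp: algebra_simps)
sublocale TK: vector_space_pair t "(*) :: 'k \<Rightarrow> 'k \<Rightarrow> 'k"
  by unfold_locales (auto simp: algebra_simps)

lemma tp_bilinear: "bilinear_map s t tp"
  using tensor_product unfolding tensor_product_def by blast

lemmas tp_linear = bilinear_mapD[OF tp_bilinear]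

lemma universal_property:
  "bilinear_map s (*) f \<Longrightarrow> \<exists>!g. Vector_Spaces.linear t (*) g \<and> (\<forall>x y. g (tp x y) = f x y)"
  using tensor_product unfolding tensor_product_def by auto

lemma span_pure_tensors: "T.span {tp x y | x y. True} = UNIV"
proof (rule ccontr)
  let ?W = "T.span {tp x y | x y. True}"
  assume "?W \<noteq> UNIV"
  then obtain v where v: "v \<notin> ?W" by auto
  obtain C where C: "C \<subseteq> ?W" "T.independent C" "?W \<subseteq> T.span C"
    using T.maximal_independent_subset by blast
  have "v \<notin> T.span C"
    using v T.span_minimal[OF C(1) T.subspace_span] by auto
  then have indep: "T.independent (insert v C)"
    using T.independent_insertI C(2) by blast
  \<comment> \<open>a functional vanishing on all pure tensors but not at v; it contradicts uniqueness
      in the universal property of the zero form\<close>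
  define h where "h = TK.construct (insert v C) (\<lambda>e. if e = v then 1 else 0)"
  have lin_h: "Vector_Spaces.linear t (*) h"
    unfolding h_def by (rule TK.linear_construct[OF indep])
  have "h e = 0" if "e \<in> C" for e
    using that \<open>v \<notin> T.span C\<close> T.span_base TK.construct_basis[OF indep, of e] unfolding h_def by fastforce
  then have "h w = 0" if "w \<in> ?W" for w
    using TK.linear_eq_on[OF lin_h TK.linear_zero, of w C] that C(3) by auto
  then have h_tp: "\<forall>x y. h (tp x y) = 0"
    by (auto intro: T.span_base)
  have "bilinear_map s (*) (\<lambda>x y. 0::'k)"
    by (rule SK.bilinear_mapI) simp_all
  then have "\<exists>!g. Vector_Spaces.linear t (*) g \<and> (\<forall>x y. g (tp x y) = 0)"
    by (rule universal_property)
  then have "h = (\<lambda>_. 0)"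
    using lin_h h_tp TK.linear_zero by (metis (no_types, lifting))
  moreover have "h v = 1"
    unfolding h_def using TK.construct_basis[OF indep, of v] by simp
  ultimately show False by simp
qed

definition pure_basis_tensors :: "'a set \<Rightarrow> 't set" where
  "pure_basis_tensors B = {tp b c | b c. b \<in> B \<and> c \<in> B}"

context
  fixes B :: "'a set"
  assumes B_independent: "S.independent B" and B_span: "S.span B = UNIV"
begin

lemma pure_tensor_coordinate:
  assumes b: "b1 \<in> B" "b2 \<in> B"
  obtains g where "Vector_Spaces.linear t (*) g"
    and "\<And>c1 c2. c1 \<in> B \<Longrightarrow> c2 \<in> B \<Longrightarrow> g (tp c1 c2) = (if c1 = b1 \<and> c2 = b2 then 1 else 0)"
proof -
  let ?rep = "S.representation B"
  have rep_linear: "?rep (x + y) b = ?rep x b + ?rep y b" "?rep (s c x) b = c * ?rep x b" for x y c b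
    using S.linear_representation[OF B_independent B_span, of b] unfolding Vector_Spaces.linear_iff by blast+
  have "bilinear_map s (*) (\<lambda>x y. ?rep x b1 * ?rep y b2)"
    by (rule SK.bilinear_mapI) (simp_all only: rep_linear distrib_left distrib_right mult_ac)
  then have "\<exists>g. Vector_Spaces.linear t (*) g \<and> (\<forall>x y. g (tp x y) = ?rep x b1 * ?rep y b2)"
    by (rule ex1_implies_ex[OF universal_property])
  then obtain g where lin_g: "Vector_Spaces.linear t (*) g"
    and g: "\<forall>x y. g (tp x y) = ?rep x b1 * ?rep y b2"
    by blast
  show ?thesis
  proof (rule that[OF lin_g])
    fix c1 c2 assume "c1 \<in> B" "c2 \<in> B"
    then show "g (tp c1 c2) = (if c1 = b1 \<and> c2 = b2 then 1 else 0)"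
      using g S.representation_basis[OF B_independent] by simp
  qed
qed

lemma tp_basis_eq_iff:
  assumes "b1 \<in> B" "b2 \<in> B" "c1 \<in> B" "c2 \<in> B"
  shows "tp b1 b2 = tp c1 c2 \<longleftrightarrow> b1 = c1 \<and> b2 = c2"
proof
  assume eq: "tp b1 b2 = tp c1 c2"
  obtain g :: "'t \<Rightarrow> 'k" where
    g: "\<And>d1 d2. d1 \<in> B \<Longrightarrow> d2 \<in> B \<Longrightarrow> g (tp d1 d2) = (if d1 = b1 \<and> d2 = b2 then 1 else 0)"
    using pure_tensor_coordinate[OF assms(1,2)] by blast
  have "g (tp c1 c2) = 1"
    using g[OF assms(1,2)] eq by simp
  then show "b1 = c1 \<and> b2 = c2"
    using g[OF assms(3,4)] by (auto split: if_splits)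
qed simp

lemma independent_pure_basis_tensors: "T.independent (pure_basis_tensors B)"
  unfolding T.independent_explicit_finite_subsets
proof (intro allI impI ballI)
  fix X u e0
  assume X: "X \<subseteq> pure_basis_tensors B" and fin: "finite X"
    and sum0: "(\<Sum>e\<in>X. t (u e) e) = 0" and e0: "e0 \<in> X"
  obtain b1 b2 where b: "b1 \<in> B" "b2 \<in> B" and e0_eq: "e0 = tp b1 b2"
    using e0 X unfolding pure_basis_tensors_def by blast
  obtain g where lin_g: "Vector_Spaces.linear t (*) g"
    and g: "\<And>c1 c2. c1 \<in> B \<Longrightarrow> c2 \<in> B \<Longrightarrow> g (tp c1 c2) = (if c1 = b1 \<and> c2 = b2 then 1 else 0)"
    using pure_tensor_coordinate[OF b] by blast
  have g_delta: "g e = (if e = e0 then 1 else 0)" if e: "e \<in> X" for e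
  proof -
    obtain c1 c2 where c: "c1 \<in> B" "c2 \<in> B" "e = tp c1 c2"
      using e X unfolding pure_basis_tensors_def by blast
    show ?thesis
      using g[OF c(1,2)] tp_basis_eq_iff[OF c(1,2) b] c(3) e0_eq by simp
  qed
  have "0 = g (\<Sum>e\<in>X. t (u e) e)"
    using sum0 TK.linear_0[OF lin_g] by simp
  also have "\<dots> = (\<Sum>e\<in>X. u e * g e)"
    by (simp add: TK.linear_sum[OF lin_g] TK.linear_scale[OF lin_g])
  also have "\<dots> = (\<Sum>e\<in>X. if e = e0 then u e else 0)"
    by (rule sum.cong) (simp_all add: g_delta)
  also have "\<dots> = u e0"
    using fin e0 by simp
  finally show "u e0 = 0" by simp
qed

lemma span_pure_basis_tensors: "T.span (pure_basis_tensors B) = UNIV"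
proof -
  have "tp x y \<in> T.span (pure_basis_tensors B)" for x y
    by (rule ST.bilinear_map_span_mem[OF tp_bilinear T.subspace_span, of B B])
      (auto simp: B_span pure_basis_tensors_def intro: T.span_base)
  then have "T.span {tp x y | x y. True} \<subseteq> T.span (pure_basis_tensors B)"
    by (intro T.span_minimal) auto
  then show ?thesis
    using span_pure_tensors by auto
qed

end

end

locale graded_tensor_product =
  graded_vector_space s V + tensor_product_space s t tp
  for s :: "'k::field \<Rightarrow> 'a::ab_group_add \<Rightarrow> 'a" and V :: "'g::ab_group_add \<Rightarrow> 'a set"
    and t :: "'k \<Rightarrow> 't::ab_group_add \<Rightarrow> 't" and tp :: "'a \<Rightarrow> 'a \<Rightarrow> 't"
begin

abbreviation basis_tensors :: "'t set" where
  "basis_tensors \<equiv> pure_basis_tensors homogeneous_basis"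

lemmas independent_basis_tensors =
  independent_pure_basis_tensors[OF independent_homogeneous_basis span_homogeneous_basis]
lemmas span_basis_tensors =
  span_pure_basis_tensors[OF independent_homogeneous_basis span_homogeneous_basis]
lemmas tp_homogeneous_basis_eq_iff =
  tp_basis_eq_iff[OF independent_homogeneous_basis span_homogeneous_basis]

definition factors :: "'t \<Rightarrow> 'a \<times> 'a" where
  "factors e = (SOME p. p \<in> homogeneous_basis \<times> homogeneous_basis \<and> e = tp (fst p) (snd p))"

lemma factors_tp:
  assumes "b1 \<in> homogeneous_basis" "b2 \<in> homogeneous_basis"
  shows "factors (tp b1 b2) = (b1, b2)"
proof -
  let ?P = "\<lambda>p. p \<in> homogeneous_basis \<times> homogeneous_basis \<and> tp b1 b2 = tp (fst p) (snd p)"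
  have "?P (factors (tp b1 b2))"
    unfolding factors_def by (rule someI[of ?P "(b1, b2)"]) (use assms in simp)
  then show ?thesis
    using tp_homogeneous_basis_eq_iff[OF assms] by (cases "factors (tp b1 b2)") auto
qed

definition tensor_deg :: "'t \<Rightarrow> 'g" where
  "tensor_deg e = deg (fst (factors e)) + deg (snd (factors e))"

lemma tp_component_basis_in_basis_tensors:
  "b1 \<in> component_basis a \<Longrightarrow> b2 \<in> component_basis b \<Longrightarrow> tp b1 b2 \<in> basis_tensors"
  using component_basis_subset unfolding pure_basis_tensors_def by blast

lemma tp_in_tensor_grading:
  "x \<in> V a \<Longrightarrow> y \<in> V b \<Longrightarrow> tp x y \<in> tensor_grading t V tp (a + b)"
  unfolding tensor_grading_def by (rule T.span_base) blast

lemma tensor_grading_eq_span_basis: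
  "tensor_grading t V tp g = T.span {e \<in> basis_tensors. tensor_deg e = g}"
proof
  show "T.span {e \<in> basis_tensors. tensor_deg e = g} \<subseteq> tensor_grading t V tp g"
  proof (rule T.span_minimal)
    show "{e \<in> basis_tensors. tensor_deg e = g} \<subseteq> tensor_grading t V tp g"
      using tp_in_tensor_grading homogeneous_basis_homogeneous
      by (force simp: pure_basis_tensors_def tensor_deg_def factors_tp)
  qed (simp add: tensor_grading_def)
  show "tensor_grading t V tp g \<subseteq> T.span {e \<in> basis_tensors. tensor_deg e = g}"
    unfolding tensor_grading_def
  proof (rule T.span_minimal, safe)
    fix x y a b
    assume xy: "x \<in> V a" "y \<in> V b" and g: "g = a + b"
    show "tp x y \<in> T.span {e \<in> basis_tensors. tensor_deg e = a + b}"
    proof (rule ST.bilinear_map_span_mem[OF tp_bilinear T.subspace_span])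
      show "x \<in> span {b \<in> homogeneous_basis. deg b = a}" "y \<in> span {c \<in> homogeneous_basis. deg c = b}"
        using xy component_span_homogeneous_basis by blast+
      show "tp b1 b2 \<in> T.span {e \<in> basis_tensors. tensor_deg e = a + b}"
        if "b1 \<in> {b \<in> homogeneous_basis. deg b = a}" "b2 \<in> {c \<in> homogeneous_basis. deg c = b}" for b1 b2
        using that by (intro T.span_base) (auto simp: pure_basis_tensors_def tensor_deg_def factors_tp)
    qed
  qed
qed

lemma graded_tensor_grading: "graded_space t (tensor_grading t V tp)"
proof -
  have "tensor_grading t V tp = (\<lambda>g. T.span {e \<in> basis_tensors. tensor_deg e = g})"
    using tensor_grading_eq_span_basis by blast
  then show ?thesis
    using T.graded_space_basis_fibres[OF independent_basis_tensors span_basis_tensors] by simp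
qed

lemma span_homogeneous_pure_tensors:
  "T.span {tp x y | x y a b. x \<in> V a \<and> y \<in> V b} = UNIV"
proof -
  have "basis_tensors \<subseteq> {tp x y | x y a b. x \<in> V a \<and> y \<in> V b}"
    unfolding pure_basis_tensors_def using homogeneous_basis_homogeneous by blast
  then show ?thesis
    using T.span_mono span_basis_tensors by blast
qed

lemma bilinear_map_tensor_grading:
  assumes m: "bilinear_map t t m"
    and pure: "\<And>x y x' y' a b a' b'. x \<in> V a \<Longrightarrow> y \<in> V b \<Longrightarrow> x' \<in> V a' \<Longrightarrow> y' \<in> V b' \<Longrightarrow>
      m (tp x y) (tp x' y') \<in> tensor_grading t V tp (a + b + (a' + b'))"
    and u: "u \<in> tensor_grading t V tp c" and w: "w \<in> tensor_grading t V tp d"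
  shows "m u w \<in> tensor_grading t V tp (c + d)"
  using u w unfolding tensor_grading_def[of t V tp c] tensor_grading_def[of t V tp d]
proof (rule TT.bilinear_map_span_mem[OF m, rotated 2], safe)
  show "T.subspace (tensor_grading t V tp (c + d))"
    by (simp add: tensor_grading_def)
qed (use pure in blast)

lemma trilinear_eq_on_tensor_grading:
  assumes F: "trilinear_map t t F" and G: "trilinear_map t t G"
    and pure: "\<And>x y x' y' u v a b a' b' a'' b''. x \<in> V a \<Longrightarrow> y \<in> V b \<Longrightarrow> x' \<in> V a' \<Longrightarrow> y' \<in> V b' \<Longrightarrow>
      u \<in> V a'' \<Longrightarrow> v \<in> V b'' \<Longrightarrow> a + b = c1 \<Longrightarrow> a' + b' = c2 \<Longrightarrow> a'' + b'' = c3 \<Longrightarrow>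
      F (tp x y) (tp x' y') (tp u v) = G (tp x y) (tp x' y') (tp u v)"
    and "w1 \<in> tensor_grading t V tp c1" "w2 \<in> tensor_grading t V tp c2" "w3 \<in> tensor_grading t V tp c3"
  shows "F w1 w2 w3 = G w1 w2 w3"
  by (rule TT.trilinear_eq_on_span[OF F G _ assms(4-6)[unfolded tensor_grading_def]]) (use pure in blast)

lemma homogeneous_pure_tensor_ext:
  assumes F: "\<And>x' y'. bilinear_map s t (\<lambda>x y. F x y x' y')" "\<And>x y. bilinear_map s t (F x y)"
    and G: "\<And>x' y'. bilinear_map s t (\<lambda>x y. G x y x' y')" "\<And>x y. bilinear_map s t (G x y)"
    and basis: "\<And>b1 b2 c1 c2. b1 \<in> component_basis a \<Longrightarrow> b2 \<in> component_basis b \<Longrightarrow>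
      c1 \<in> component_basis a' \<Longrightarrow> c2 \<in> component_basis b' \<Longrightarrow> F b1 b2 c1 c2 = G b1 b2 c1 c2"
    and x: "x \<in> V a" and y: "y \<in> V b" and x': "x' \<in> V a'" and y': "y' \<in> V b'"
  shows "F x y x' y' = G x y x' y'"
proof -
  have "F b1 b2 x' y' = G b1 b2 x' y'" if "b1 \<in> component_basis a" "b2 \<in> component_basis b" for b1 b2
    by (rule ST.bilinear_eq_on_span[OF F(2) G(2), where X="component_basis a'" and Y="component_basis b'"])
      (use basis that x' y' component_basis(3) in auto)
  then show ?thesis
    by (rule ST.bilinear_eq_on_span[where f="\<lambda>x y. F x y x' y'" and g="\<lambda>x y. G x y x' y'", OF F(1) G(1),
          where X="component_basis a" and Y="component_basis b"])
      (use x y component_basis(3) in auto)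
qed

end

section \<open>The tensor square of a ternary Leibniz-Poisson color algebra\<close>

locale ternary_LP_tensor_square =
  graded_tensor_product s V t tp
  for s :: "'k::field \<Rightarrow> 'a::ab_group_add \<Rightarrow> 'a" and V :: "'g::ab_group_add \<Rightarrow> 'a set"
    and t :: "'k \<Rightarrow> 't::ab_group_add \<Rightarrow> 't" and tp :: "'a \<Rightarrow> 'a \<Rightarrow> 't" +
  fixes mul :: "'a \<Rightarrow> 'a \<Rightarrow> 'a" and br :: "'a \<Rightarrow> 'a \<Rightarrow> 'a \<Rightarrow> 'a" and \<epsilon> :: "'g \<Rightarrow> 'g \<Rightarrow> 'k"
  assumes skew: "skew_bicharacter \<epsilon>"
    and ternary: "ternary_LP_color_algebra s V mul br \<epsilon>"
begin

lemma mul_bilinear: "bilinear_map s s mul"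
  and br_trilinear: "trilinear_map s s br"
  and mul_homogeneous: "x \<in> V a \<Longrightarrow> y \<in> V b \<Longrightarrow> mul x y \<in> V (a + b)"
  and br_homogeneous: "x \<in> V a \<Longrightarrow> y \<in> V b \<Longrightarrow> z \<in> V c \<Longrightarrow> br x y z \<in> V (a + b + c)"
  and mul_assoc: "mul (mul x y) z = mul x (mul y z)"
  using ternary unfolding ternary_LP_color_algebra_def even2_def even3_def by auto

lemma br_br:
  "x \<in> V a \<Longrightarrow> y \<in> V b \<Longrightarrow> z \<in> V c \<Longrightarrow> w \<in> V d \<Longrightarrow> u \<in> V e \<Longrightarrow>
   br (br x y z) w u = br x y (br z w u) + s (\<epsilon> c (d + e)) (br x (br y w u) z)
                        + s (\<epsilon> (b + c) (d + e)) (br (br x w u) y z)"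
  using ternary unfolding ternary_LP_color_algebra_def by blast

lemma br_mul:
  "x \<in> V a \<Longrightarrow> y \<in> V b \<Longrightarrow> z \<in> V c \<Longrightarrow> w \<in> V d \<Longrightarrow>
   br (mul x y) z w = mul x (br y z w) + s (\<epsilon> b (c + d)) (mul (br x z w) y)"
  using ternary unfolding ternary_LP_color_algebra_def by blast

lemma \<epsilon>_add_left: "\<epsilon> (a + b) c = \<epsilon> a c * \<epsilon> b c"
  and \<epsilon>_add_right: "\<epsilon> a (b + c) = \<epsilon> a b * \<epsilon> a c"
  and \<epsilon>_skew: "\<epsilon> a b * \<epsilon> b a = 1"
  using skew unfolding skew_bicharacter_def by blast+

lemmas mul_linear = bilinear_mapD[OF mul_bilinear]
lemmas br_linear = trilinear_mapD[OF br_trilinear]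

text \<open>Degrees are only available on homogeneous elements, so both operations are first
  defined on the basis of tensors of homogeneous basis vectors and then extended bilinearly.\<close>

definition basis_mul :: "'t \<Rightarrow> 't \<Rightarrow> 't" where
  "basis_mul e e' = (case factors e of (b1, b2) \<Rightarrow> case factors e' of (c1, c2) \<Rightarrow>
      t (\<epsilon> (deg b2) (deg c1)) (tp (mul b1 c1) (mul b2 c2)))"

definition basis_br :: "'t \<Rightarrow> 't \<Rightarrow> 't" where
  "basis_br e e' = (case factors e of (b1, b2) \<Rightarrow> case factors e' of (c1, c2) \<Rightarrow>
      tp b1 (br b2 c1 c2) + t (\<epsilon> (deg b2) (deg c1 + deg c2)) (tp (br b1 c1 c2) b2))"

definition tensor_mul :: "'t \<Rightarrow> 't \<Rightarrow> 't" where
  "tensor_mul u w = TT.construct basis_tensors (\<lambda>e. TT.construct basis_tensors (basis_mul e) w) u"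

definition tensor_br :: "'t \<Rightarrow> 't \<Rightarrow> 't" where
  "tensor_br u w = TT.construct basis_tensors (\<lambda>e. TT.construct basis_tensors (basis_br e) w) u"

lemma tensor_mul_bilinear: "bilinear_map t t tensor_mul"
  unfolding tensor_mul_def[abs_def] by (rule TT.bilinear_map_construct2[OF independent_basis_tensors])

lemma tensor_br_bilinear: "bilinear_map t t tensor_br"
  unfolding tensor_br_def[abs_def] by (rule TT.bilinear_map_construct2[OF independent_basis_tensors])

lemmas tensor_mul_linear = bilinear_mapD[OF tensor_mul_bilinear]
lemmas tensor_br_linear = bilinear_mapD[OF tensor_br_bilinear]

lemmas multilinear_simps = tp_linear mul_linear br_linear tensor_mul_linear tensor_br_linear
  T.scale_right_distrib T.scale_scale

lemma tensor_mul_tp_pure: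
  assumes "x \<in> V a" "y \<in> V b" "x' \<in> V a'" "y' \<in> V b'"
  shows "tensor_mul (tp x y) (tp x' y') = t (\<epsilon> b a') (tp (mul x x') (mul y y'))"
proof (rule homogeneous_pure_tensor_ext[OF _ _ _ _ _ assms])
  fix b1 b2 c1 c2
  assume "b1 \<in> component_basis a" "b2 \<in> component_basis b" "c1 \<in> component_basis a'" "c2 \<in> component_basis b'"
  then show "tensor_mul (tp b1 b2) (tp c1 c2) = t (\<epsilon> b a') (tp (mul b1 c1) (mul b2 c2))"
    by (simp add: tensor_mul_def basis_mul_def TT.construct2_basis[OF independent_basis_tensors]
        tp_component_basis_in_basis_tensors factors_tp deg_component_basis
        subsetD[OF component_basis_subset])
qed (rule ST.bilinear_mapI; simp add: multilinear_simps mult.commute)+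

lemma tensor_br_tp_pure:
  assumes "x \<in> V a" "y \<in> V b" "x' \<in> V a'" "y' \<in> V b'"
  shows "tensor_br (tp x y) (tp x' y') = tp x (br y x' y') + t (\<epsilon> b (a' + b')) (tp (br x x' y') y)"
proof (rule homogeneous_pure_tensor_ext[OF _ _ _ _ _ assms])
  fix b1 b2 c1 c2
  assume "b1 \<in> component_basis a" "b2 \<in> component_basis b" "c1 \<in> component_basis a'" "c2 \<in> component_basis b'"
  then show "tensor_br (tp b1 b2) (tp c1 c2) = tp b1 (br b2 c1 c2) + t (\<epsilon> b (a' + b')) (tp (br b1 c1 c2) b2)"
    by (simp add: tensor_br_def basis_br_def TT.construct2_basis[OF independent_basis_tensors]
        tp_component_basis_in_basis_tensors factors_tp deg_component_basis
        subsetD[OF component_basis_subset])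
qed (rule ST.bilinear_mapI; simp add: multilinear_simps mult.commute add_ac)+

lemma tensor_mul_assoc_tp:
  assumes x: "x \<in> V a" and y: "y \<in> V b" and x': "x' \<in> V c" and y': "y' \<in> V d"
    and u: "u \<in> V e" and v: "v \<in> V f"
  shows "tensor_mul (tensor_mul (tp x y) (tp x' y')) (tp u v) = tensor_mul (tp x y) (tensor_mul (tp x' y') (tp u v))"
  by (simp only: tensor_mul_tp_pure[OF x y x' y'] tensor_mul_tp_pure[OF x' y' u v]
      tensor_mul_tp_pure[OF mul_homogeneous[OF x x'] mul_homogeneous[OF y y'] u v]
      tensor_mul_tp_pure[OF x y mul_homogeneous[OF x' u] mul_homogeneous[OF y' v]]
      tensor_mul_linear T.scale_scale mul_assoc \<epsilon>_add_left \<epsilon>_add_right mult_ac)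

lemma tensor_br_tensor_mul_tp:
  assumes x: "x \<in> V a" and y: "y \<in> V b" and x': "x' \<in> V c" and y': "y' \<in> V d"
    and u: "u \<in> V e" and v: "v \<in> V f"
  shows "tensor_br (tensor_mul (tp x y) (tp x' y')) (tp u v) =
    tensor_mul (tp x y) (tensor_br (tp x' y') (tp u v))
    + t (\<epsilon> (c + d) (e + f)) (tensor_mul (tensor_br (tp x y) (tp u v)) (tp x' y'))"
proof -
  let ?T1 = "tp (mul x x') (mul y (br y' u v))"
  let ?T2 = "tp (mul x x') (mul (br y u v) y')"
  let ?T3 = "tp (mul x (br x' u v)) (mul y y')"
  let ?T4 = "tp (mul (br x u v) x') (mul y y')"
  have lhs: "tensor_br (tensor_mul (tp x y) (tp x' y')) (tp u v) =
     t (\<epsilon> b c) ?T1 + t (\<epsilon> b c * \<epsilon> d (e + f)) ?T2 + t (\<epsilon> b c * \<epsilon> (b + d) (e + f)) ?T3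
     + t (\<epsilon> b c * \<epsilon> (b + d) (e + f) * \<epsilon> c (e + f)) ?T4"
    by (simp only: tensor_mul_tp_pure[OF x y x' y']
        tensor_br_tp_pure[OF mul_homogeneous[OF x x'] mul_homogeneous[OF y y'] u v]
        br_mul[OF y y' u v] br_mul[OF x x' u v] multilinear_simps \<epsilon>_add_left \<epsilon>_add_right mult_ac add_ac)
  have rhs: "tensor_mul (tp x y) (tensor_br (tp x' y') (tp u v))
      + t (\<epsilon> (c + d) (e + f)) (tensor_mul (tensor_br (tp x y) (tp u v)) (tp x' y')) =
     t (\<epsilon> b c) ?T1 + t (\<epsilon> (c + d) (e + f) * \<epsilon> (b + e + f) c) ?T2 + t (\<epsilon> d (e + f) * \<epsilon> b (c + e + f)) ?T3
     + t (\<epsilon> (c + d) (e + f) * \<epsilon> b (e + f) * \<epsilon> b c) ?T4"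
    by (simp only: tensor_br_tp_pure[OF x' y' u v] tensor_br_tp_pure[OF x y u v]
        tensor_mul_tp_pure[OF x y x' br_homogeneous[OF y' u v]]
        tensor_mul_tp_pure[OF x y br_homogeneous[OF x' u v] y']
        tensor_mul_tp_pure[OF x br_homogeneous[OF y u v] x' y']
        tensor_mul_tp_pure[OF br_homogeneous[OF x u v] y x' y']
        multilinear_simps \<epsilon>_add_left \<epsilon>_add_right mult_ac add_ac)
  have "\<epsilon> (c + d) (e + f) * \<epsilon> (b + e + f) c = \<epsilon> b c * \<epsilon> d (e + f) * (\<epsilon> c (e + f) * \<epsilon> (e + f) c)"
    by (simp only: \<epsilon>_add_left[of c d] \<epsilon>_add_left[of "b + e" f] \<epsilon>_add_left[of b e]
        \<epsilon>_add_left[of e f, symmetric] mult_ac)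
  then have T2: "\<epsilon> b c * \<epsilon> d (e + f) = \<epsilon> (c + d) (e + f) * \<epsilon> (b + e + f) c"
    by (simp only: \<epsilon>_skew mult_1_right)
  have T3: "\<epsilon> b c * \<epsilon> (b + d) (e + f) = \<epsilon> d (e + f) * \<epsilon> b (c + e + f)"
    and T4: "\<epsilon> b c * \<epsilon> (b + d) (e + f) * \<epsilon> c (e + f) = \<epsilon> (c + d) (e + f) * \<epsilon> b (e + f) * \<epsilon> b c"
    by (simp_all only: \<epsilon>_add_left \<epsilon>_add_right mult_ac)
  show ?thesis
    unfolding lhs rhs by (subst T4, subst T2, subst T3, rule refl)
qed

lemma tensor_br_tensor_br_tp:
  assumes x: "x \<in> V a" and y: "y \<in> V b" and x': "x' \<in> V c" and y': "y' \<in> V d"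
    and u: "u \<in> V e" and v: "v \<in> V f"
  shows "tensor_br (tensor_br (tp x y) (tp x' y')) (tp u v) =
    tensor_br (tp x y) (tensor_br (tp x' y') (tp u v))
    + t (\<epsilon> (c + d) (e + f)) (tensor_br (tensor_br (tp x y) (tp u v)) (tp x' y'))"
proof -
  let ?P1 = "tp x (br y x' (br y' u v))"
  let ?P2 = "tp x (br y (br x' u v) y')"
  let ?P3 = "tp x (br (br y u v) x' y')"
  let ?Q1 = "tp (br x x' (br y' u v)) y"
  let ?Q2 = "tp (br x (br x' u v) y') y"
  let ?Q3 = "tp (br (br x u v) x' y') y"
  let ?C1 = "tp (br x u v) (br y x' y')"
  let ?C2 = "tp (br x x' y') (br y u v)"
  have lhs: "tensor_br (tensor_br (tp x y) (tp x' y')) (tp u v) =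
     ?P1 + t (\<epsilon> b (c + (d + e + f))) ?Q1 + t (\<epsilon> d (e + f)) ?P2 + t (\<epsilon> d (e + f) * \<epsilon> b (c + e + f + d)) ?Q2
     + t (\<epsilon> (c + d) (e + f)) ?P3 + t (\<epsilon> b (c + d)) ?C2 + t (\<epsilon> (c + d) (e + f) * \<epsilon> b (e + f)) ?C1
     + t (\<epsilon> (c + d) (e + f) * \<epsilon> b (e + f) * \<epsilon> b (c + d)) ?Q3"
    by (simp only: tensor_br_tp_pure[OF x y x' y'] tensor_br_tp_pure[OF x br_homogeneous[OF y x' y'] u v]
        tensor_br_tp_pure[OF br_homogeneous[OF x x' y'] y u v] br_br[OF y x' y' u v] br_br[OF x x' y' u v]
        multilinear_simps \<epsilon>_add_left \<epsilon>_add_right mult_ac add_ac)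
  have rhs: "tensor_br (tp x y) (tensor_br (tp x' y') (tp u v))
      + t (\<epsilon> (c + d) (e + f)) (tensor_br (tensor_br (tp x y) (tp u v)) (tp x' y')) =
     ?P1 + t (\<epsilon> b (c + (d + e + f))) ?Q1 + t (\<epsilon> d (e + f)) ?P2 + t (\<epsilon> d (e + f) * \<epsilon> b (c + e + f + d)) ?Q2
     + t (\<epsilon> (c + d) (e + f)) ?P3 + t (\<epsilon> (c + d) (e + f) * \<epsilon> (b + e + f) (c + d)) ?C2
     + t (\<epsilon> (c + d) (e + f) * \<epsilon> b (e + f)) ?C1
     + t (\<epsilon> (c + d) (e + f) * \<epsilon> b (e + f) * \<epsilon> b (c + d)) ?Q3"
    by (simp only: tensor_br_tp_pure[OF x' y' u v] tensor_br_tp_pure[OF x y u v]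
        tensor_br_tp_pure[OF x y x' br_homogeneous[OF y' u v]]
        tensor_br_tp_pure[OF x y br_homogeneous[OF x' u v] y']
        tensor_br_tp_pure[OF x br_homogeneous[OF y u v] x' y']
        tensor_br_tp_pure[OF br_homogeneous[OF x u v] y x' y']
        multilinear_simps \<epsilon>_add_left \<epsilon>_add_right mult_ac add_ac)
  have "\<epsilon> (c + d) (e + f) * \<epsilon> (b + e + f) (c + d) = \<epsilon> b (c + d) * (\<epsilon> (c + d) (e + f) * \<epsilon> (e + f) (c + d))"
    by (simp only: \<epsilon>_add_left[of "b + e" f] \<epsilon>_add_left[of b e] \<epsilon>_add_left[of e f, symmetric] mult_ac)
  then have C2: "\<epsilon> (c + d) (e + f) * \<epsilon> (b + e + f) (c + d) = \<epsilon> b (c + d)"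
    by (simp only: \<epsilon>_skew mult_1_right)
  show ?thesis
    unfolding lhs rhs C2 ..
qed

lemma tensor_mul_assoc: "tensor_mul (tensor_mul u v) w = tensor_mul u (tensor_mul v w)"
proof (rule TT.trilinear_eq_on_span[where f="\<lambda>u v w. tensor_mul (tensor_mul u v) w"
      and g="\<lambda>u v w. tensor_mul u (tensor_mul v w)"])
  show "trilinear_map t t (\<lambda>u v w. tensor_mul (tensor_mul u v) w)"
    "trilinear_map t t (\<lambda>u v w. tensor_mul u (tensor_mul v w))"
    by (rule TT.trilinear_mapI; simp add: multilinear_simps)+
  show "u \<in> T.span {tp x y | x y a b. x \<in> V a \<and> y \<in> V b}"
    "v \<in> T.span {tp x y | x y a b. x \<in> V a \<and> y \<in> V b}"
    "w \<in> T.span {tp x y | x y a b. x \<in> V a \<and> y \<in> V b}"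
    using span_homogeneous_pure_tensors by auto
qed (auto intro: tensor_mul_assoc_tp)

lemma tensor_mul_homogeneous:
  "u \<in> tensor_grading t V tp c \<Longrightarrow> w \<in> tensor_grading t V tp d \<Longrightarrow>
   tensor_mul u w \<in> tensor_grading t V tp (c + d)"
proof (rule bilinear_map_tensor_grading[OF tensor_mul_bilinear])
  fix x y x' y' a b a' b'
  assume "x \<in> V a" "y \<in> V b" "x' \<in> V a'" "y' \<in> V b'"
  then have "tp (mul x x') (mul y y') \<in> tensor_grading t V tp ((a + a') + (b + b'))"
    by (intro tp_in_tensor_grading mul_homogeneous)
  then show "tensor_mul (tp x y) (tp x' y') \<in> tensor_grading t V tp (a + b + (a' + b'))"
    using \<open>x \<in> V a\<close> \<open>y \<in> V b\<close> \<open>x' \<in> V a'\<close> \<open>y' \<in> V b'\<close>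
    by (simp add: tensor_mul_tp_pure tensor_grading_def T.span_scale add_ac)
qed

lemma tensor_br_homogeneous:
  "u \<in> tensor_grading t V tp c \<Longrightarrow> w \<in> tensor_grading t V tp d \<Longrightarrow>
   tensor_br u w \<in> tensor_grading t V tp (c + d)"
proof (rule bilinear_map_tensor_grading[OF tensor_br_bilinear])
  fix x y x' y' a b a' b'
  assume "x \<in> V a" "y \<in> V b" "x' \<in> V a'" "y' \<in> V b'"
  moreover have "a + (b + a' + b') = a + b + (a' + b')" "a + a' + b' + b = a + b + (a' + b')"
    by (simp_all add: add_ac)
  ultimately have "tp x (br y x' y') \<in> tensor_grading t V tp (a + b + (a' + b'))"
    "tp (br x x' y') y \<in> tensor_grading t V tp (a + b + (a' + b'))"
    by (metis tp_in_tensor_grading br_homogeneous)+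
  then show "tensor_br (tp x y) (tp x' y') \<in> tensor_grading t V tp (a + b + (a' + b'))"
    using \<open>x \<in> V a\<close> \<open>y \<in> V b\<close> \<open>x' \<in> V a'\<close> \<open>y' \<in> V b'\<close>
    by (simp add: tensor_br_tp_pure tensor_grading_def T.span_add T.span_scale)
qed

lemma tensor_br_tensor_mul:
  assumes "u \<in> tensor_grading t V tp a" "v \<in> tensor_grading t V tp b" "w \<in> tensor_grading t V tp c"
  shows "tensor_br (tensor_mul u v) w = tensor_mul u (tensor_br v w) + t (\<epsilon> b c) (tensor_mul (tensor_br u w) v)"
proof (rule trilinear_eq_on_tensor_grading[OF _ _ _ assms,
      where F="\<lambda>u v w. tensor_br (tensor_mul u v) w"
        and G="\<lambda>u v w. tensor_mul u (tensor_br v w) + t (\<epsilon> b c) (tensor_mul (tensor_br u w) v)"])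
  show "trilinear_map t t (\<lambda>u v w. tensor_br (tensor_mul u v) w)"
    "trilinear_map t t (\<lambda>u v w. tensor_mul u (tensor_br v w) + t (\<epsilon> b c) (tensor_mul (tensor_br u w) v))"
    by (rule TT.trilinear_mapI; simp add: multilinear_simps mult.commute add_ac)+
qed (use tensor_br_tensor_mul_tp in blast)

lemma tensor_br_tensor_br:
  assumes "u \<in> tensor_grading t V tp a" "v \<in> tensor_grading t V tp b" "w \<in> tensor_grading t V tp c"
  shows "tensor_br (tensor_br u v) w = tensor_br u (tensor_br v w) + t (\<epsilon> b c) (tensor_br (tensor_br u w) v)"
proof (rule trilinear_eq_on_tensor_grading[OF _ _ _ assms,
      where F="\<lambda>u v w. tensor_br (tensor_br u v) w"
        and G="\<lambda>u v w. tensor_br u (tensor_br v w) + t (\<epsilon> b c) (tensor_br (tensor_br u w) v)"])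
  show "trilinear_map t t (\<lambda>u v w. tensor_br (tensor_br u v) w)"
    "trilinear_map t t (\<lambda>u v w. tensor_br u (tensor_br v w) + t (\<epsilon> b c) (tensor_br (tensor_br u w) v))"
    by (rule TT.trilinear_mapI; simp add: multilinear_simps mult.commute add_ac)+
qed (use tensor_br_tensor_br_tp in blast)

lemma LP_color_algebra_tensor_square:
  "LP_color_algebra t (tensor_grading t V tp) tensor_mul tensor_br \<epsilon>"
  unfolding LP_color_algebra_def even2_def
  by (auto simp: graded_tensor_grading tensor_mul_bilinear tensor_br_bilinear tensor_mul_assoc
      intro: tensor_mul_homogeneous tensor_br_homogeneous tensor_br_tensor_br tensor_br_tensor_mul)

end

theorem mainTheorem17:
  fixes s :: "'k::field \<Rightarrow> 'a::ab_group_add \<Rightarrow> 'a"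
    and V :: "'g::ab_group_add \<Rightarrow> 'a set"
    and mul :: "'a \<Rightarrow> 'a \<Rightarrow> 'a"
    and br :: "'a \<Rightarrow> 'a \<Rightarrow> 'a \<Rightarrow> 'a"
    and \<epsilon> :: "'g \<Rightarrow> 'g \<Rightarrow> 'k"
    and t :: "'k \<Rightarrow> 't::ab_group_add \<Rightarrow> 't"
    and tp :: "'a \<Rightarrow> 'a \<Rightarrow> 't"
  assumes char: "(2::'k) \<noteq> 0"
    and eps: "skew_bicharacter \<epsilon>"
    and A: "ternary_LP_color_algebra s V mul br \<epsilon>"
    and T: "tensor_product s t tp"
  shows "\<exists>mulT brT.
     bilinear_map t t mulT \<and> bilinear_map t t brT \<and>
     (\<forall>a b a' b' x y x' y'. x \<in> V a \<longrightarrow> y \<in> V b \<longrightarrow> x' \<in> V a' \<longrightarrow> y' \<in> V b' \<longrightarrow>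
        mulT (tp x y) (tp x' y') = t (\<epsilon> b a') (tp (mul x x') (mul y y')) \<and>
        brT (tp x y) (tp x' y') = tp x (br y x' y') + t (\<epsilon> b (a' + b')) (tp (br x x' y') y)) \<and>
     LP_color_algebra t (tensor_grading t V tp) mulT brT \<epsilon>"
proof -
  interpret ternary_LP_tensor_square s V t tp mul br \<epsilon>
  proof
    show "graded_space s V"
      using A unfolding ternary_LP_color_algebra_def by blast
  qed (fact T eps A)+
  show ?thesis
    using tensor_mul_bilinear tensor_br_bilinear tensor_mul_tp_pure tensor_br_tp_pure
      LP_color_algebra_tensor_square
    by (intro exI[of _ tensor_mul] exI[of _ tensor_br] conjI allI impI) auto
qed

end
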